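(* For every $n\ge2$, $\operatorname{diam}(\mathcal{C}_3(K_{1,n-1}))=\lfloor 3n/2\rfloor$.
   Context: $K_{1,n-1}$ is the star with one center and $n-1$ leaves. A proper 3-coloring of a tree $T=(V,E)$ is a map $f\colon V\to\mathbb{Z}/3\mathbb{Z}$ with $f(u)\neq f(v)$ for every edge $uv\in E$. The 3-coloring graph $\mathcal{C}_3(T)$ has the proper 3-colorings as vertices, two colorings adjacent iff they differ at exactly one vertex; $\operatorname{diam}$ denotes graph diameter. *)

theory Defs
  imports "HOL-Library.Extended_Nat"
begin

text \<open>Graphs are given by a vertex set V and a symmetric edge relation E.
  Colours are the k elements 0..k-1 (for k = 3 this is Z/3Z as a set).
  Colourings are extensional: value 0 outside V.\<close>

definition proper_coloring :: "nat \<Rightarrow> 'a set \<Rightarrow> ('a \<Rightarrow> 'a \<Rightarrow> bool) \<Rightarrow> ('a \<Rightarrow> nat) \<Rightarrow> bool" where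
  "proper_coloring k V E f \<longleftrightarrow>
     (\<forall>v\<in>V. f v < k) \<and> (\<forall>v. v \<notin> V \<longrightarrow> f v = 0) \<and>
     (\<forall>u\<in>V. \<forall>v\<in>V. E u v \<longrightarrow> f u \<noteq> f v)"

definition colorings :: "nat \<Rightarrow> 'a set \<Rightarrow> ('a \<Rightarrow> 'a \<Rightarrow> bool) \<Rightarrow> ('a \<Rightarrow> nat) set" where
  "colorings k V E = {f. proper_coloring k V E f}"

definition col_adj :: "'a set \<Rightarrow> ('a \<Rightarrow> nat) \<Rightarrow> ('a \<Rightarrow> nat) \<Rightarrow> bool" where
  "col_adj V f g \<longleftrightarrow> card {v\<in>V. f v \<noteq> g v} = 1"

definition col_walk :: "nat \<Rightarrow> 'a set \<Rightarrow> ('a \<Rightarrow> 'a \<Rightarrow> bool) \<Rightarrow> ('a \<Rightarrow> nat) list \<Rightarrow> bool" where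
  "col_walk k V E xs \<longleftrightarrow> xs \<noteq> [] \<and> set xs \<subseteq> colorings k V E \<and>
     (\<forall>i. Suc i < length xs \<longrightarrow> col_adj V (xs ! i) (xs ! Suc i))"

text \<open>Graph distance in the coloring graph (infinity if not connected).\<close>
definition col_dist :: "nat \<Rightarrow> 'a set \<Rightarrow> ('a \<Rightarrow> 'a \<Rightarrow> bool) \<Rightarrow> ('a \<Rightarrow> nat) \<Rightarrow> ('a \<Rightarrow> nat) \<Rightarrow> enat" where
  "col_dist k V E f g =
     (INF xs \<in> {xs. col_walk k V E xs \<and> hd xs = f \<and> last xs = g}. enat (length xs - 1))"

definition col_diam :: "nat \<Rightarrow> 'a set \<Rightarrow> ('a \<Rightarrow> 'a \<Rightarrow> bool) \<Rightarrow> enat" where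
  "col_diam k V E = (SUP f \<in> colorings k V E. SUP g \<in> colorings k V E. col_dist k V E f g)"

text \<open>The star K_{1,n-1}: vertices 0..n-1, centre 0, leaves 1..n-1.\<close>
definition star_V :: "nat \<Rightarrow> nat set" where
  "star_V n = {0..<n}"

definition star_E :: "nat \<Rightarrow> nat \<Rightarrow> bool" where
  "star_E u v \<longleftrightarrow> (u = 0 \<and> v \<noteq> 0) \<or> (v = 0 \<and> u \<noteq> 0)"

end

theory Submission
  imports Defs
begin

text \<open>The distance between colourings f and g of the star has a closed form, star_dist: if
  the centres agree, each differing leaf is recoloured once; otherwise the shorter of two explicit
  routes is taken. This closed form grows by at most one along an edge of the colouring graph, and
  every colouring other than f has a neighbour strictly closer to f, so it is the graph distance.
  When the centres differ the two route lengths add up to 3n, whence the bound \<lfloor>3n/2\<rfloor>;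
  it is attained by f with every leaf coloured g 0 and g with \<lfloor>n/2\<rfloor> leaves coloured f 0.\<close>

lemma col_walk_snoc:
  assumes "col_walk k V E xs" "g \<in> colorings k V E" "col_adj V (last xs) g"
  shows "col_walk k V E (xs @ [g])"
  unfolding col_walk_def
proof (intro conjI allI impI)
  have xs: "xs \<noteq> []" "set xs \<subseteq> colorings k V E"
    "\<And>i. Suc i < length xs \<Longrightarrow> col_adj V (xs ! i) (xs ! Suc i)"
    using assms(1) unfolding col_walk_def by auto
  show "xs @ [g] \<noteq> []" "set (xs @ [g]) \<subseteq> colorings k V E"
    using xs(2) assms(2) by auto
  fix i assume i: "Suc i < length (xs @ [g])"
  show "col_adj V ((xs @ [g]) ! i) ((xs @ [g]) ! Suc i)"
  proof (cases "Suc i < length xs")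
    case True
    then show ?thesis using xs(3) by (simp add: nth_append)
  next
    case False
    then have "i = length xs - 1" using i by simp
    then show ?thesis using assms(3) xs(1) by (simp add: nth_append last_conv_nth)
  qed
qed

lemma potential_le_walk_length:
  assumes walk: "col_walk k V E xs"
    and lip: "\<And>h h'. h \<in> colorings k V E \<Longrightarrow> h' \<in> colorings k V E \<Longrightarrow>
      col_adj V h h' \<Longrightarrow> \<phi> h' \<le> \<phi> h + 1"
  shows "\<phi> (last xs) \<le> \<phi> (hd xs) + (length xs - 1)"
proof -
  have xs: "xs \<noteq> []" "\<And>i. i < length xs \<Longrightarrow> xs ! i \<in> colorings k V E"
    "\<And>i. Suc i < length xs \<Longrightarrow> col_adj V (xs ! i) (xs ! Suc i)"
    using walk unfolding col_walk_def by auto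
  have "\<phi> (xs ! i) \<le> \<phi> (xs ! 0) + i" if "i < length xs" for i
    using that
  proof (induction i)
    case (Suc i)
    then have "\<phi> (xs ! Suc i) \<le> \<phi> (xs ! i) + 1"
      using lip[OF xs(2) xs(2) xs(3)] by simp
    then show ?case using Suc by simp
  qed simp
  from this[of "length xs - 1"] show ?thesis
    using xs(1) by (simp add: hd_conv_nth last_conv_nth)
qed

lemma potential_le_col_dist:
  assumes "\<phi> f = 0"
    and "\<And>h h'. h \<in> colorings k V E \<Longrightarrow> h' \<in> colorings k V E \<Longrightarrow>
      col_adj V h h' \<Longrightarrow> \<phi> h' \<le> \<phi> h + 1"
  shows "enat (\<phi> g) \<le> col_dist k V E f g"
  unfolding col_dist_def
  using potential_le_walk_length[of k V E _ \<phi>] assms by (intro INF_greatest) fastforce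

lemma col_dist_le_potential:
  assumes f: "f \<in> colorings k V E"
    and descent: "\<And>g. g \<in> colorings k V E \<Longrightarrow> g \<noteq> f \<Longrightarrow>
      \<exists>g'\<in>colorings k V E. col_adj V g' g \<and> \<phi> g' < \<phi> g"
    and g: "g \<in> colorings k V E"
  shows "col_dist k V E f g \<le> enat (\<phi> g)"
proof -
  have "\<exists>xs. col_walk k V E xs \<and> hd xs = f \<and> last xs = g \<and> length xs - 1 \<le> \<phi> g"
    using g
  proof (induction "\<phi> g" arbitrary: g rule: less_induct)
    case less
    show ?case
    proof (cases "g = f")
      case True
      then show ?thesis using f unfolding col_walk_def by (intro exI[of _ "[f]"]) auto
    next
      case False
      then obtain g' where g': "g' \<in> colorings k V E" "col_adj V g' g" "\<phi> g' < \<phi> g"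
        using descent less.prems by blast
      then obtain xs where xs: "col_walk k V E xs" "hd xs = f" "last xs = g'"
        "length xs - 1 \<le> \<phi> g'"
        using less.hyps by blast
      have "xs \<noteq> []" using xs(1) unfolding col_walk_def by simp
      then show ?thesis
        using xs g' less.prems col_walk_snoc[OF xs(1)] by (intro exI[of _ "xs @ [g]"]) auto
    qed
  qed
  then show ?thesis
    unfolding col_dist_def by (auto intro: INF_lower2)
qed

lemma col_adjE:
  assumes "h \<in> colorings k V E" "h' \<in> colorings k V E" "col_adj V h h'"
  obtains w where "w \<in> V" "h w \<noteq> h' w" "\<And>v. v \<noteq> w \<Longrightarrow> h v = h' v"
proof -
  obtain w where w: "{v\<in>V. h v \<noteq> h' v} = {w}"
    using assms(3) unfolding col_adj_def by (auto simp: card_1_singleton_iff)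
  have "h v = h' v" if "v \<noteq> w" for v
  proof (cases "v \<in> V")
    case True
    then show ?thesis using w that by blast
  next
    case False
    then show ?thesis using assms(1,2) unfolding colorings_def proper_coloring_def by simp
  qed
  moreover have "w \<in> V" "h w \<noteq> h' w" using w by auto
  ultimately show thesis using that by blast
qed

lemma col_adj_fun_upd: "w \<in> V \<Longrightarrow> c \<noteq> g w \<Longrightarrow> col_adj V (g(w := c)) g"
proof -
  assume "w \<in> V" "c \<noteq> g w"
  then have "{v\<in>V. (g(w := c)) v \<noteq> g v} = {w}" by auto
  then show ?thesis unfolding col_adj_def by simp
qed

lemma card_fun_upd_le:
  assumes "finite A" "\<And>v. v \<noteq> w \<Longrightarrow> h' v = h v"
  shows "card {v\<in>A. P v (h' v)} \<le> card {v\<in>A. P v (h v)} + 1"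
proof -
  have "card {v\<in>A. P v (h' v)} \<le> card (insert w {v\<in>A. P v (h v)})"
    using assms by (intro card_mono) auto
  also have "\<dots> \<le> card {v\<in>A. P v (h v)} + 1"
    using assms(1) by (simp add: card_insert_if)
  finally show ?thesis .
qed

lemma card_filter_add_card_filter_not:
  assumes "finite A"
  shows "card {v\<in>A. P v} + card {v\<in>A. \<not> P v} = card A"
proof -
  have "card ({v\<in>A. P v} \<union> {v\<in>A. \<not> P v}) = card {v\<in>A. P v} + card {v\<in>A. \<not> P v}"
    using assms by (intro card_Un_disjoint) auto
  moreover have "{v\<in>A. P v} \<union> {v\<in>A. \<not> P v} = A" by blast
  ultimately show ?thesis by simp
qed

lemma third_colorE:
  assumes "a < 3" "b < 3" "a \<noteq> b"
  obtains t :: nat where "\<And>x. x < 3 \<and> x \<noteq> a \<and> x \<noteq> b \<longleftrightarrow> x = t"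
proof
  show "x < 3 \<and> x \<noteq> a \<and> x \<noteq> b \<longleftrightarrow> x = 3 - a - b" for x
    using assms by (auto simp: less_Suc_eq numeral_3_eq_3)
qed

abbreviation star_colorings :: "nat \<Rightarrow> (nat \<Rightarrow> nat) set" where
  "star_colorings n \<equiv> colorings 3 (star_V n) star_E"

lemma star_coloring_iff:
  "h \<in> star_colorings n \<longleftrightarrow>
    h 0 < 3 \<and> (\<forall>v\<in>{1..<n}. h v < 3 \<and> h v \<noteq> h 0) \<and> (\<forall>v\<ge>n. h v = 0)"
  (is "_ \<longleftrightarrow> ?R")
proof
  assume "h \<in> star_colorings n"
  then show ?R
    unfolding colorings_def proper_coloring_def star_V_def star_E_def
    by (cases "n = 0") auto
next
  assume ?R
  then show "h \<in> star_colorings n"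
    unfolding colorings_def proper_coloring_def star_V_def star_E_def
    by (auto simp: less_Suc_eq_0_disj) (metis One_nat_def atLeastLessThan_iff leI less_one)+
qed

lemma star_coloring_upd_leaf:
  "g \<in> star_colorings n \<Longrightarrow> l \<in> {1..<n} \<Longrightarrow> c < 3 \<Longrightarrow> c \<noteq> g 0 \<Longrightarrow>
    g(l := c) \<in> star_colorings n"
  unfolding star_coloring_iff by auto

lemma star_coloring_upd_center:
  "g \<in> star_colorings n \<Longrightarrow> 0 < n \<Longrightarrow> c < 3 \<Longrightarrow> \<forall>v\<in>{1..<n}. g v \<noteq> c \<Longrightarrow>
    g(0 := c) \<in> star_colorings n"
  unfolding star_coloring_iff by auto

text \<open>With centre colours a = f 0 \<noteq> b = g 0 and third colour t, the centre can only move while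
  all leaves are coloured with the remaining colour. Directly: recolour the leaves of f coloured b
  to t, move the centre a \<rightarrow> b, then recolour to a the leaves that g colours a. Via t: recolour
  all leaves to b, move the centre a \<rightarrow> t, recolour all n - 1 leaves to a, move t \<rightarrow> b and
  recolour the leaves to g; this costs (n - 1) + 2 = n + 1 moves beyond the leaf recolourings
  at the two ends (centre colours of colourings can only differ when n > 0).\<close>
definition star_dist :: "nat \<Rightarrow> (nat \<Rightarrow> nat) \<Rightarrow> (nat \<Rightarrow> nat) \<Rightarrow> nat" where
  "star_dist n f g =
    (if f 0 = g 0 then card {v\<in>{1..<n}. f v \<noteq> g v}
     else min (card {v\<in>{1..<n}. f v = g 0} + card {v\<in>{1..<n}. g v = f 0} + 1)
              (card {v\<in>{1..<n}. f v \<noteq> g 0} + card {v\<in>{1..<n}. g v \<noteq> f 0} + n + 1))"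

lemma star_dist_same_center:
  "f 0 = g 0 \<Longrightarrow> star_dist n f g = card {v\<in>{1..<n}. f v \<noteq> g v}"
  unfolding star_dist_def by simp

lemma star_dist_diff_center:
  "f 0 \<noteq> g 0 \<Longrightarrow> star_dist n f g =
    min (card {v\<in>{1..<n}. f v = g 0} + card {v\<in>{1..<n}. g v = f 0} + 1)
        (card {v\<in>{1..<n}. f v \<noteq> g 0} + card {v\<in>{1..<n}. g v \<noteq> f 0} + n + 1)"
  unfolding star_dist_def by simp

lemma card_leaves_le: "card {v\<in>{1..<n}. P v} \<le> n - 1"
  by (rule order_trans[OF card_mono[of "{1..<n}"]]) auto

lemma card_leaves_add_not: "card {v\<in>{1..<n}. P v} + card {v\<in>{1..<n}. \<not> P v} = n - 1"
  using card_filter_add_card_filter_not[of "{1..<n}" P] by simp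

lemma card_leaves_eq_iff: "card {v\<in>{1..<n}. P v} = n - 1 \<longleftrightarrow> (\<forall>v\<in>{1..<n}. P v)"
proof
  assume "card {v\<in>{1..<n}. P v} = n - 1"
  then have "{v\<in>{1..<n}. P v} = {1..<n}"
    by (intro card_subset_eq) auto
  then show "\<forall>v\<in>{1..<n}. P v" by blast
next
  assume "\<forall>v\<in>{1..<n}. P v"
  then have "{v\<in>{1..<n}. P v} = {1..<n}" by blast
  then show "card {v\<in>{1..<n}. P v} = n - 1" by (simp only: card_atLeastLessThan)
qed

lemma star_dist_leaf_update_le:
  assumes center: "h' 0 = h 0" and upd: "\<And>v. v \<noteq> w \<Longrightarrow> h' v = h v"
  shows "star_dist n f h' \<le> star_dist n f h + 1"
proof (cases "f 0 = h 0")
  case True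
  then show ?thesis
    using center card_fun_upd_le[of "{1..<n}" w h' h "\<lambda>v y. f v \<noteq> y", OF _ upd]
    by (simp add: star_dist_same_center)
next
  case False
  have "card {v\<in>{1..<n}. h' v = f 0} \<le> card {v\<in>{1..<n}. h v = f 0} + 1"
    "card {v\<in>{1..<n}. h' v \<noteq> f 0} \<le> card {v\<in>{1..<n}. h v \<noteq> f 0} + 1"
    using card_fun_upd_le[of "{1..<n}" w h' h "\<lambda>v y. y = f 0", OF _ upd]
      card_fun_upd_le[of "{1..<n}" w h' h "\<lambda>v y. y \<noteq> f 0", OF _ upd] by simp_all
  then show ?thesis
    using False center by (simp add: star_dist_diff_center)
qed

lemma star_colorings_diff_centerE:
  assumes f: "f \<in> star_colorings n" and g: "g \<in> star_colorings n" and center: "f 0 \<noteq> g 0"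
  obtains t where "\<And>x. x < 3 \<and> x \<noteq> f 0 \<and> x \<noteq> g 0 \<longleftrightarrow> x = t" and "0 < n"
    and "\<And>v. v \<in> {1..<n} \<Longrightarrow> f v = g 0 \<or> f v = t"
    and "\<And>v. v \<in> {1..<n} \<Longrightarrow> g v = f 0 \<or> g v = t"
proof -
  obtain t where third: "\<And>x. x < 3 \<and> x \<noteq> f 0 \<and> x \<noteq> g 0 \<longleftrightarrow> x = t"
    using f g center unfolding star_coloring_iff by (auto elim: third_colorE)
  moreover have "0 < n"
    using f g center unfolding star_coloring_iff by (metis le0 neq0_conv)
  moreover have "f v = g 0 \<or> f v = t" "g v = f 0 \<or> g v = t" if "v \<in> {1..<n}" for v
    using that f g third[of "f v"] third[of "g v"] unfolding star_coloring_iff by auto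
  ultimately show thesis using that by blast
qed

lemma star_colorings_center_moveE:
  assumes h: "h \<in> star_colorings n" and h': "h' \<in> star_colorings n"
    and center: "h 0 \<noteq> h' 0" and leaves: "\<forall>v\<in>{1..<n}. h' v = h v"
  obtains t where "\<And>x. x < 3 \<and> x \<noteq> h 0 \<and> x \<noteq> h' 0 \<longleftrightarrow> x = t"
    and "\<And>v. v \<in> {1..<n} \<Longrightarrow> h v = t"
proof -
  obtain t where third: "\<And>x. x < 3 \<and> x \<noteq> h 0 \<and> x \<noteq> h' 0 \<longleftrightarrow> x = t" and "0 < n"
    and leaf_h: "\<And>v. v \<in> {1..<n} \<Longrightarrow> h v = h' 0 \<or> h v = t"
    and leaf_h': "\<And>v. v \<in> {1..<n} \<Longrightarrow> h' v = h 0 \<or> h' v = t"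
    by (rule star_colorings_diff_centerE[OF h h' center]) auto
  have leaf_t: "h v = t" if v: "v \<in> {1..<n}" for v
  proof (rule ccontr)
    assume "h v \<noteq> t"
    then have "h v = h' 0" "h' v = h 0"
      using leaf_h[OF v] leaf_h'[OF v] leaves v by auto
    then show False using leaves v center by simp
  qed
  from third leaf_t show thesis by (rule that)
qed

lemma star_dist_center_update_eq:
  assumes f: "f \<in> star_colorings n" and h: "h \<in> star_colorings n" and h': "h' \<in> star_colorings n"
    and center: "h 0 \<noteq> h' 0" and leaves: "\<forall>v\<in>{1..<n}. h' v = h v" and agree: "f 0 = h 0"
  shows "star_dist n f h' = star_dist n f h + 1"
proof -
  obtain t where third: "\<And>x. x < 3 \<and> x \<noteq> h 0 \<and> x \<noteq> h' 0 \<longleftrightarrow> x = t"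
    and leaf_h: "\<And>v. v \<in> {1..<n} \<Longrightarrow> h v = t"
    by (rule star_colorings_center_moveE[OF h h' center leaves]) auto
  have leaf_f: "f v = h' 0 \<or> f v = t" if "v \<in> {1..<n}" for v
    using that f agree third[of "f v"] star_coloring_iff by auto
  have "{v\<in>{1..<n}. f v \<noteq> h v} = {v\<in>{1..<n}. f v = h' 0}"
    using leaf_h leaf_f third[of t] by auto
  then have "star_dist n f h = card {v\<in>{1..<n}. f v = h' 0}"
    using agree by (simp add: star_dist_same_center)
  moreover have "card {v\<in>{1..<n}. h' v = f 0} = 0"
    using leaves leaf_h agree third by auto
  moreover have "card {v\<in>{1..<n}. f v = h' 0} \<le> n - 1"
    by (rule card_leaves_le)
  moreover have "star_dist n f h' = min (card {v\<in>{1..<n}. f v = h' 0} + card {v\<in>{1..<n}. h' v = f 0} + 1)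
      (card {v\<in>{1..<n}. f v \<noteq> h' 0} + card {v\<in>{1..<n}. h' v \<noteq> f 0} + n + 1)"
    using agree center by (intro star_dist_diff_center) simp
  ultimately show ?thesis by linarith
qed

lemma star_dist_center_update_le:
  assumes f: "f \<in> star_colorings n" and h: "h \<in> star_colorings n" and h': "h' \<in> star_colorings n"
    and center: "h 0 \<noteq> h' 0" and leaves: "\<forall>v\<in>{1..<n}. h' v = h v"
  shows "star_dist n f h' \<le> star_dist n f h + 1"
proof -
  obtain t where third: "\<And>x. x < 3 \<and> x \<noteq> h 0 \<and> x \<noteq> h' 0 \<longleftrightarrow> x = t"
    and leaf_h: "\<And>v. v \<in> {1..<n} \<Longrightarrow> h v = t"
    by (rule star_colorings_center_moveE[OF h h' center leaves]) auto
  consider "f 0 = h 0" | "f 0 = h' 0" | "f 0 = t"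
    using third f star_coloring_iff by blast
  then show ?thesis
  proof cases
    case 1
    then show ?thesis using star_dist_center_update_eq[OF f h h' center leaves] by simp
  next
    case 2
    then show ?thesis using star_dist_center_update_eq[OF f h' h _ _ 2] center leaves by simp
  next
    case 3
    have leaf_f: "f v = h 0 \<or> f v = h' 0" if "v \<in> {1..<n}" for v
      using that f third[of "f v"] 3 star_coloring_iff by auto
    have "star_dist n f h = min (card {v\<in>{1..<n}. f v = h 0} + card {v\<in>{1..<n}. h v = f 0} + 1)
        (card {v\<in>{1..<n}. f v \<noteq> h 0} + card {v\<in>{1..<n}. h v \<noteq> f 0} + n + 1)"
      "star_dist n f h' = min (card {v\<in>{1..<n}. f v = h' 0} + card {v\<in>{1..<n}. h' v = f 0} + 1)
        (card {v\<in>{1..<n}. f v \<noteq> h' 0} + card {v\<in>{1..<n}. h' v \<noteq> f 0} + n + 1)"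
      using 3 third by (intro star_dist_diff_center; blast)+
    moreover have "card {v\<in>{1..<n}. h v = f 0} = n - 1" "card {v\<in>{1..<n}. h' v = f 0} = n - 1"
      unfolding card_leaves_eq_iff using leaves leaf_h 3 by simp_all
    moreover have "card {v\<in>{1..<n}. f v \<noteq> h 0} = card {v\<in>{1..<n}. f v = h' 0}"
      "card {v\<in>{1..<n}. f v \<noteq> h' 0} = card {v\<in>{1..<n}. f v = h 0}"
      using leaf_f center by (auto intro!: arg_cong[where f = card])
    ultimately show ?thesis
      using card_leaves_add_not[of n "\<lambda>v. h v = f 0"] card_leaves_add_not[of n "\<lambda>v. h' v = f 0"]
      by linarith
  qed
qed

lemma star_dist_adj_le:
  assumes f: "f \<in> star_colorings n" and h: "h \<in> star_colorings n" and h': "h' \<in> star_colorings n"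
    and adj: "col_adj (star_V n) h h'"
  shows "star_dist n f h' \<le> star_dist n f h + 1"
proof -
  obtain w where w: "h w \<noteq> h' w" "\<And>v. v \<noteq> w \<Longrightarrow> h v = h' v"
    using col_adjE[OF h h' adj] by blast
  show ?thesis
  proof (cases "w = 0")
    case True
    then show ?thesis
      using w by (intro star_dist_center_update_le[OF f h h']) auto
  next
    case False
    then show ?thesis
      using w by (intro star_dist_leaf_update_le[of h' h w]) auto
  qed
qed

lemma star_dist_descent_same_center:
  assumes f: "f \<in> star_colorings n" and g: "g \<in> star_colorings n"
    and "g \<noteq> f" and center: "f 0 = g 0"
  shows "\<exists>g'\<in>star_colorings n. col_adj (star_V n) g' g \<and> star_dist n f g' < star_dist n f g"
proof -
  obtain l where fl: "g l \<noteq> f l"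
    using \<open>g \<noteq> f\<close> by (auto simp: fun_eq_iff)
  moreover have "l \<noteq> 0" using fl center by metis
  moreover have "l < n" using fl f g unfolding star_coloring_iff by (metis leI)
  ultimately have l: "l \<in> {1..<n}" "f l \<noteq> g l" by auto
  let ?g' = "g(l := f l)"
  have "?g' \<in> star_colorings n"
    using f l center by (intro star_coloring_upd_leaf[OF g]) (auto simp: star_coloring_iff)
  moreover have "col_adj (star_V n) ?g' g"
    using l by (intro col_adj_fun_upd) (auto simp: star_V_def)
  moreover have "card {v\<in>{1..<n}. f v \<noteq> ?g' v} < card {v\<in>{1..<n}. f v \<noteq> g v}"
    using l by (intro psubset_card_mono) auto
  then have "star_dist n f ?g' < star_dist n f g"
    using l center by (simp add: star_dist_same_center)
  ultimately show ?thesis by blast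
qed

lemma star_dist_descent_direct:
  assumes f: "f \<in> star_colorings n" and g: "g \<in> star_colorings n" and center: "f 0 \<noteq> g 0"
    and direct: "card {v\<in>{1..<n}. f v = g 0} + card {v\<in>{1..<n}. g v = f 0} + 1
      \<le> card {v\<in>{1..<n}. f v \<noteq> g 0} + card {v\<in>{1..<n}. g v \<noteq> f 0} + n + 1"
  shows "\<exists>g'\<in>star_colorings n. col_adj (star_V n) g' g \<and> star_dist n f g' < star_dist n f g"
proof -
  obtain t where third: "\<And>x. x < 3 \<and> x \<noteq> f 0 \<and> x \<noteq> g 0 \<longleftrightarrow> x = t" and "0 < n"
    and leaf_f: "\<And>v. v \<in> {1..<n} \<Longrightarrow> f v = g 0 \<or> f v = t"
    and leaf_g: "\<And>v. v \<in> {1..<n} \<Longrightarrow> g v = f 0 \<or> g v = t"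
    by (rule star_colorings_diff_centerE[OF f g center]) auto
  have dist: "star_dist n f g = card {v\<in>{1..<n}. f v = g 0} + card {v\<in>{1..<n}. g v = f 0} + 1"
    using center direct by (simp add: star_dist_diff_center)
  show ?thesis
  proof (cases "\<exists>l\<in>{1..<n}. g l = f 0")
    case True
    then obtain l where l: "l \<in> {1..<n}" "g l = f 0" by blast
    let ?g' = "g(l := t)"
    have "?g' \<in> star_colorings n"
      using third by (intro star_coloring_upd_leaf[OF g l(1)]) auto
    moreover have "col_adj (star_V n) ?g' g"
      using l third by (intro col_adj_fun_upd) (auto simp: star_V_def)
    moreover have "card {v\<in>{1..<n}. ?g' v = f 0} < card {v\<in>{1..<n}. g v = f 0}"
      using l third by (intro psubset_card_mono) auto
    then have "star_dist n f ?g' < star_dist n f g"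
      using l center dist by (simp add: star_dist_diff_center)
    ultimately show ?thesis by blast
  next
    case False
    let ?g' = "g(0 := f 0)"
    have "card {v\<in>{1..<n}. f v \<noteq> ?g' v} \<le> card {v\<in>{1..<n}. f v = g 0}"
      using False leaf_f leaf_g by (intro card_mono) fastforce+
    moreover have "star_dist n f ?g' = card {v\<in>{1..<n}. f v \<noteq> ?g' v}"
      by (rule star_dist_same_center) simp
    ultimately have "star_dist n f ?g' < star_dist n f g"
      using dist by linarith
    moreover have "?g' \<in> star_colorings n"
      using f False \<open>0 < n\<close> by (intro star_coloring_upd_center[OF g]) (auto simp: star_coloring_iff)
    moreover have "col_adj (star_V n) ?g' g"
      using center \<open>0 < n\<close> by (intro col_adj_fun_upd) (auto simp: star_V_def)
    ultimately show ?thesis by blast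
  qed
qed

lemma star_dist_descent_detour:
  assumes f: "f \<in> star_colorings n" and g: "g \<in> star_colorings n" and center: "f 0 \<noteq> g 0"
    and detour: "card {v\<in>{1..<n}. f v \<noteq> g 0} + card {v\<in>{1..<n}. g v \<noteq> f 0} + n + 1
      < card {v\<in>{1..<n}. f v = g 0} + card {v\<in>{1..<n}. g v = f 0} + 1"
  shows "\<exists>g'\<in>star_colorings n. col_adj (star_V n) g' g \<and> star_dist n f g' < star_dist n f g"
proof -
  obtain t where third: "\<And>x. x < 3 \<and> x \<noteq> f 0 \<and> x \<noteq> g 0 \<longleftrightarrow> x = t" and "0 < n"
    and leaf_f: "\<And>v. v \<in> {1..<n} \<Longrightarrow> f v = g 0 \<or> f v = t"
    and leaf_g: "\<And>v. v \<in> {1..<n} \<Longrightarrow> g v = f 0 \<or> g v = t"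
    by (rule star_colorings_diff_centerE[OF f g center]) auto
  have t: "t < 3" "t \<noteq> f 0" "t \<noteq> g 0"
    using third[of t] by simp_all
  have dist: "star_dist n f g
      = card {v\<in>{1..<n}. f v \<noteq> g 0} + card {v\<in>{1..<n}. g v \<noteq> f 0} + n + 1"
    using center detour by (simp add: star_dist_diff_center)
  show ?thesis
  proof (cases "\<exists>l\<in>{1..<n}. g l \<noteq> f 0")
    case True
    then obtain l where l: "l \<in> {1..<n}" "g l \<noteq> f 0" by blast
    let ?g' = "g(l := f 0)"
    have "?g' \<in> star_colorings n"
      using f center by (intro star_coloring_upd_leaf[OF g l(1)]) (auto simp: star_coloring_iff)
    moreover have "col_adj (star_V n) ?g' g"
      using l by (intro col_adj_fun_upd) (auto simp: star_V_def)
    moreover have "card {v\<in>{1..<n}. ?g' v \<noteq> f 0} < card {v\<in>{1..<n}. g v \<noteq> f 0}"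
      using l by (intro psubset_card_mono) auto
    then have "star_dist n f ?g' < star_dist n f g"
      using l center dist by (simp add: star_dist_diff_center)
    ultimately show ?thesis by blast
  next
    case False
    let ?g' = "g(0 := t)"
    have "star_dist n f ?g'
        \<le> card {v\<in>{1..<n}. f v = t} + card {v\<in>{1..<n}. ?g' v = f 0} + 1"
      using t by (simp add: star_dist_diff_center)
    moreover have "card {v\<in>{1..<n}. ?g' v = f 0} = n - 1"
      unfolding card_leaves_eq_iff using False by simp
    moreover have "card {v\<in>{1..<n}. f v = t} = card {v\<in>{1..<n}. f v \<noteq> g 0}"
      using leaf_f third by (intro arg_cong[where f = card]) auto
    ultimately have "star_dist n f ?g' < star_dist n f g"
      using dist \<open>0 < n\<close> by linarith
    moreover have "?g' \<in> star_colorings n"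
      using False t \<open>0 < n\<close> by (intro star_coloring_upd_center[OF g]) auto
    moreover have "col_adj (star_V n) ?g' g"
      using t \<open>0 < n\<close> by (intro col_adj_fun_upd) (auto simp: star_V_def)
    ultimately show ?thesis by blast
  qed
qed

lemma star_dist_descent:
  assumes f: "f \<in> star_colorings n" and g: "g \<in> star_colorings n" and "g \<noteq> f"
  shows "\<exists>g'\<in>star_colorings n. col_adj (star_V n) g' g \<and> star_dist n f g' < star_dist n f g"
proof (cases "f 0 = g 0")
  case True
  then show ?thesis using star_dist_descent_same_center[OF f g \<open>g \<noteq> f\<close>] by blast
next
  case False
  then show ?thesis
    using star_dist_descent_direct[OF f g False] star_dist_descent_detour[OF f g False] by linarith
qed

lemma col_dist_star:
  assumes f: "f \<in> star_colorings n" and g: "g \<in> star_colorings n"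
  shows "col_dist 3 (star_V n) star_E f g = enat (star_dist n f g)"
proof (rule antisym)
  show "col_dist 3 (star_V n) star_E f g \<le> enat (star_dist n f g)"
    using star_dist_descent[OF f] by (intro col_dist_le_potential[OF f _ g]) blast
  show "enat (star_dist n f g) \<le> col_dist 3 (star_V n) star_E f g"
    using star_dist_adj_le[OF f] by (intro potential_le_col_dist) (auto simp: star_dist_same_center)
qed

lemma star_dist_le:
  assumes "0 < n"
  shows "star_dist n f g \<le> 3 * n div 2"
proof (cases "f 0 = g 0")
  case True
  then show ?thesis
    using card_leaves_le[of n "\<lambda>v. f v \<noteq> g v"] by (simp add: star_dist_same_center)
next
  case False
  have "2 * star_dist n f g
      \<le> (card {v\<in>{1..<n}. f v = g 0} + card {v\<in>{1..<n}. g v = f 0} + 1)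
        + (card {v\<in>{1..<n}. f v \<noteq> g 0} + card {v\<in>{1..<n}. g v \<noteq> f 0} + n + 1)"
    unfolding star_dist_diff_center[of f g n, OF False] by (simp add: min_def)
  also have "\<dots> = 3 * n"
    using card_leaves_add_not[of n "\<lambda>v. f v = g 0"] card_leaves_add_not[of n "\<lambda>v. g v = f 0"]
      assms by simp
  finally show ?thesis by linarith
qed

lemma star_dist_attains_bound:
  assumes "0 < n"
  obtains f g where "f \<in> star_colorings n" "g \<in> star_colorings n" "star_dist n f g = 3 * n div 2"
proof
  define f :: "nat \<Rightarrow> nat" where "f v = (if v = 0 then 0 else if v < n then 1 else 0)" for v
  define g :: "nat \<Rightarrow> nat"
    where "g v = (if v = 0 then 1 else if v < n then (if v \<le> n div 2 then 0 else 2) else 0)" for v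
  show "f \<in> star_colorings n" "g \<in> star_colorings n"
    unfolding star_coloring_iff f_def g_def using assms by auto
  have "card {v\<in>{1..<n}. f v = g 0} = n - 1"
    unfolding card_leaves_eq_iff by (simp add: f_def g_def)
  moreover have "{v\<in>{1..<n}. g v = f 0} = {1..n div 2}"
    using assms by (auto simp: f_def g_def)
  ultimately show "star_dist n f g = 3 * n div 2"
    using card_leaves_add_not[of n "\<lambda>v. f v = g 0"] card_leaves_add_not[of n "\<lambda>v. g v = f 0"]
      assms by (simp add: star_dist_diff_center f_def g_def)
qed

theorem mainTheorem17:
  fixes n :: nat
  assumes "n \<ge> 2"
  shows "col_diam 3 (star_V n) star_E = enat ((3 * n) div 2)"
proof -
  have pos: "0 < n" using assms by simp
  have "col_diam 3 (star_V n) star_E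
      = (SUP f\<in>star_colorings n. SUP g\<in>star_colorings n. enat (star_dist n f g))" (is "_ = ?D")
    unfolding col_diam_def by (intro SUP_cong refl) (simp add: col_dist_star)
  also have "?D = enat (3 * n div 2)"
  proof (rule antisym)
    show "?D \<le> enat (3 * n div 2)"
      using star_dist_le[OF pos] by (intro SUP_least) simp
    obtain f g where "f \<in> star_colorings n" "g \<in> star_colorings n" "star_dist n f g = 3 * n div 2"
      by (rule star_dist_attains_bound[OF pos])
    then show "enat (3 * n div 2) \<le> ?D"
      by (intro SUP_upper2[of f] SUP_upper2[of g]) auto
  qed
  finally show ?thesis .
qed

end
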